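(* Let $G$ be a permutational digraph and $n\in\mathbb{N}$ (with $n\ge 0$). Then $G^{[0,n]}$ is congruence $(2n+2)$-permutable but not congruence $(2n+1)$-permutable.
   Context: Digraphs are finite and loopless. A digraph $G=(V,E)$ is permutational if it is a disjoint union of directed cycles, i.e. $E$ is (the graph of) a permutation of $V$ without fixed points. For integers $0\le j$, $G^{[0,j]}$ is the digraph on $V\cup\{1,\dots,j\}$ (disjoint) with edges: $u\to w$ for integers $1\le u<w\le j$; the edges of $E$; $v\to u$ for every $v\in V$ and $u\in\{1,\dots,j\}$. A polymorphism is a map $f:V^k\to V$ with $(f(a_1,\dots,a_k),f(b_1,\dots,b_k))\in E$ whenever all $(a_i,b_i)\in E$. A digraph is congruence $m$-permutable if it has ternary polymorphisms $p_0,\dots,p_m$ with $p_0(x,y,z)=x$, $p_i(x,x,y)=p_{i+1}(x,y,y)$ for $0\le i<m$, and $p_m(x,y,z)=z$, for all vertices. *)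

theory Defs
  imports "HOL-Combinatorics.Permutations"
begin

definition digraph :: "'a set \<Rightarrow> ('a \<times> 'a) set \<Rightarrow> bool" where
  "digraph V E \<longleftrightarrow> finite V \<and> E \<subseteq> V \<times> V \<and> (\<forall>v. (v, v) \<notin> E)"

definition permutational :: "'a set \<Rightarrow> ('a \<times> 'a) set \<Rightarrow> bool" where
  "permutational V E \<longleftrightarrow> digraph V E \<and>
     (\<exists>\<sigma>. \<sigma> permutes V \<and> (\<forall>v\<in>V. \<sigma> v \<noteq> v) \<and> E = {(v, \<sigma> v) | v. v \<in> V})"

text \<open>The digraph G^[0,j]: vertices V (as Inl) disjoint union {1..j} (as Inr).\<close>
definition ext_vertices :: "'a set \<Rightarrow> nat \<Rightarrow> ('a + nat) set" where
  "ext_vertices V j = Inl ` V \<union> Inr ` {1..j}"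

definition ext_edges :: "'a set \<Rightarrow> ('a \<times> 'a) set \<Rightarrow> nat \<Rightarrow> (('a + nat) \<times> ('a + nat)) set" where
  "ext_edges V E j =
     {(Inr u, Inr w) | u w. 1 \<le> u \<and> u < w \<and> w \<le> j}
   \<union> {(Inl a, Inl b) | a b. (a, b) \<in> E}
   \<union> {(Inl v, Inr u) | v u. v \<in> V \<and> 1 \<le> u \<and> u \<le> j}"

definition polymorphism3 :: "'a set \<Rightarrow> ('a \<times> 'a) set \<Rightarrow> ('a \<Rightarrow> 'a \<Rightarrow> 'a \<Rightarrow> 'a) \<Rightarrow> bool" where
  "polymorphism3 V E f \<longleftrightarrow>
     (\<forall>x\<in>V. \<forall>y\<in>V. \<forall>z\<in>V. f x y z \<in> V) \<and>
     (\<forall>a1 b1 a2 b2 a3 b3. (a1, b1) \<in> E \<longrightarrow> (a2, b2) \<in> E \<longrightarrow> (a3, b3) \<in> E \<longrightarrow>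
        (f a1 a2 a3, f b1 b2 b3) \<in> E)"

definition cong_permutable :: "'a set \<Rightarrow> ('a \<times> 'a) set \<Rightarrow> nat \<Rightarrow> bool" where
  "cong_permutable V E m \<longleftrightarrow>
     (\<exists>p :: nat \<Rightarrow> 'a \<Rightarrow> 'a \<Rightarrow> 'a \<Rightarrow> 'a.
        (\<forall>i\<le>m. polymorphism3 V E (p i)) \<and>
        (\<forall>x\<in>V. \<forall>y\<in>V. \<forall>z\<in>V. p 0 x y z = x) \<and>
        (\<forall>i<m. \<forall>x\<in>V. \<forall>y\<in>V. p i x x y = p (Suc i) x y y) \<and>
        (\<forall>x\<in>V. \<forall>y\<in>V. \<forall>z\<in>V. p m x y z = z))"

end

theory Submission
  imports Defs
begin

text \<open>
  Upper bound: if the edge relation of \<open>G\<close> is a partial bijection, \<open>if x = y then z else x\<close> is a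
  Maltsev polymorphism, so \<open>G\<^bsup>[0,0]\<^esup>\<close> is 2-permutable. Adjoining a sink that every vertex points to
  turns a chain \<open>p\<^sub>0, \<dots>, p\<^sub>m\<close> into \<open>x, p\<^sub>0, \<dots>, p\<^sub>m, z\<close>, where each term is extended by sending
  triples that leave the old digraph to the sink, except where the identities at the two ends force
  a projection.

  Lower bound: every vertex \<open>v\<close> of \<open>G\<close> has an out-neighbour in \<open>G\<close> whose only in-neighbour in
  \<open>G\<^bsup>[0,n]\<^esup>\<close> is \<open>v\<close>, while every vertex of level below \<open>k\<close> points to \<open>k\<close>. Pushing \<open>p\<^sub>0(x,y,z) = x\<close>
  along the chain one level at a time gives \<open>p\<^sub>j(v,y,z) = v\<close> for \<open>v \<in> G\<close> and \<open>y, z\<close> of level at most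
  \<open>n - j\<close>; applied to the reversed chain it gives \<open>p\<^sub>m\<^sub>-\<^sub>j(x,y,w) = w\<close>. For \<open>m = 2n+1\<close> the two meet:
  for distinct \<open>v, w \<in> G\<close>, \<open>v = p\<^sub>n(v,v,w) = p\<^sub>n\<^sub>+\<^sub>1(v,w,w) = w\<close>.
\<close>

definition hagemann_mitschke_chain ::
    "'a set \<Rightarrow> ('a \<times> 'a) set \<Rightarrow> nat \<Rightarrow> (nat \<Rightarrow> 'a \<Rightarrow> 'a \<Rightarrow> 'a \<Rightarrow> 'a) \<Rightarrow> bool" where
  "hagemann_mitschke_chain V E m p \<longleftrightarrow>
     (\<forall>i\<le>m. polymorphism3 V E (p i)) \<and>
     (\<forall>x\<in>V. \<forall>y\<in>V. \<forall>z\<in>V. p 0 x y z = x) \<and>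
     (\<forall>i<m. \<forall>x\<in>V. \<forall>y\<in>V. p i x x y = p (Suc i) x y y) \<and>
     (\<forall>x\<in>V. \<forall>y\<in>V. \<forall>z\<in>V. p m x y z = z)"

lemma cong_permutable_iff_chain:
  "cong_permutable V E m \<longleftrightarrow> (\<exists>p. hagemann_mitschke_chain V E m p)"
  unfolding cong_permutable_def hagemann_mitschke_chain_def ..

lemma polymorphism3_edge:
  "polymorphism3 V E f \<Longrightarrow> (a1, b1) \<in> E \<Longrightarrow> (a2, b2) \<in> E \<Longrightarrow> (a3, b3) \<in> E \<Longrightarrow>
    (f a1 a2 a3, f b1 b2 b3) \<in> E"
  unfolding polymorphism3_def by blast

lemma polymorphism3_first: "polymorphism3 V E (\<lambda>x y z. x)"
  and polymorphism3_third: "polymorphism3 V E (\<lambda>x y z. z)"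
  unfolding polymorphism3_def by auto

lemma polymorphism3_reverse:
  "polymorphism3 V E f \<Longrightarrow> polymorphism3 V E (\<lambda>x y z. f z y x)"
  unfolding polymorphism3_def by blast

lemma hagemann_mitschke_chain_reverse:
  assumes "hagemann_mitschke_chain V E m p"
  shows "hagemann_mitschke_chain V E m (\<lambda>i x y z. p (m - i) z y x)"
  using assms unfolding hagemann_mitschke_chain_def
  by (auto simp: polymorphism3_reverse Suc_diff_Suc)

lemma polymorphism3_maltsev:
  assumes "single_valued E" and "single_valued (E\<inverse>)"
  shows "polymorphism3 V E (\<lambda>x y z. if x = y then z else x)"
  using assms unfolding polymorphism3_def single_valued_def by auto

lemma cong_permutable_2_if_bijective:
  assumes "single_valued E" and "single_valued (E\<inverse>)"
  shows "cong_permutable V E 2"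
  unfolding cong_permutable_iff_chain hagemann_mitschke_chain_def
proof (intro exI conjI)
  let ?p = "\<lambda>(i::nat) x y z. if i = 0 then x else if i = 1 then (if x = y then z else x) else z"
  show "\<forall>i\<le>2. polymorphism3 V E (?p i)"
    using polymorphism3_maltsev[OF assms] polymorphism3_first polymorphism3_third
    by (auto simp: le_Suc_eq numeral_2_eq_2)
qed auto

definition sink_padded_chain ::
    "'a set \<Rightarrow> 'a \<Rightarrow> nat \<Rightarrow> (nat \<Rightarrow> 'a \<Rightarrow> 'a \<Rightarrow> 'a \<Rightarrow> 'a) \<Rightarrow> nat \<Rightarrow> 'a \<Rightarrow> 'a \<Rightarrow> 'a \<Rightarrow> 'a" where
  "sink_padded_chain W t m p i x y z =
     (if i = 0 then x
      else if i = m + 2 then z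
      else if x \<in> W \<and> y \<in> W \<and> z \<in> W then p (i - 1) x y z
      else if i = 1 \<and> y = z then x
      else if i = m + 1 \<and> x = y then z
      else t)"

lemma sink_padded_chain_inner:
  "i \<noteq> 0 \<Longrightarrow> i \<noteq> m + 2 \<Longrightarrow> x \<in> W \<and> y \<in> W \<and> z \<in> W \<Longrightarrow>
    sink_padded_chain W t m p i x y z = p (i - 1) x y z"
  by (simp add: sink_padded_chain_def)

lemma sink_padded_chain_outer:
  assumes "i \<noteq> 0" "i \<noteq> m + 2" "\<not> (x \<in> W \<and> y \<in> W \<and> z \<in> W)"
  shows "sink_padded_chain W t m p i x y z =
      (if i = 1 \<and> y = z then x else if i = m + 1 \<and> x = y then z else t)"
  unfolding sink_padded_chain_def using assms by (simp only: if_False if_not_P)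

lemma sink_padded_chain_closed:
  assumes chain: "hagemann_mitschke_chain W F m p" and i: "i \<le> m + 2"
    and xyz: "x \<in> insert t W" "y \<in> insert t W" "z \<in> insert t W"
  shows "sink_padded_chain W t m p i x y z \<in> insert t W"
proof (cases "i = 0 \<or> i = m + 2")
  case True
  then show ?thesis using xyz by (auto simp: sink_padded_chain_def)
next
  case False
  show ?thesis
  proof (cases "x \<in> W \<and> y \<in> W \<and> z \<in> W")
    case True
    have "i - 1 \<le> m" using i False by linarith
    then have "p (i - 1) x y z \<in> W"
      using chain True unfolding hagemann_mitschke_chain_def polymorphism3_def by blast
    then show ?thesis using False True by (simp add: sink_padded_chain_inner)
  next
    case outside: False
    then show ?thesis using False xyz by (simp add: sink_padded_chain_outer)
  qed
qed

lemma polymorphism3_sink_padded_chain: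
  assumes F: "F \<subseteq> W \<times> W" and t: "t \<notin> W" and chain: "hagemann_mitschke_chain W F m p"
    and i: "i \<le> m + 2"
  shows "polymorphism3 (insert t W) (F \<union> (\<lambda>w. (w, t)) ` W) (sink_padded_chain W t m p i)"
    (is "polymorphism3 _ ?F' ?q")
  unfolding polymorphism3_def
proof (intro conjI allI impI ballI)
  fix x y z assume "x \<in> insert t W" "y \<in> insert t W" "z \<in> insert t W"
  then show "?q x y z \<in> insert t W"
    using sink_padded_chain_closed[OF chain i] by blast
next
  fix a1 b1 a2 b2 a3 b3 assume e: "(a1, b1) \<in> ?F'" "(a2, b2) \<in> ?F'" "(a3, b3) \<in> ?F'"
  have source: "a \<in> W" if "(a, b) \<in> ?F'" for a b using that F by blast
  have old_edge: "(a, b) \<in> F" if "(a, b) \<in> ?F'" "b \<in> W" for a b using that t by blast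
  have a: "a1 \<in> W" "a2 \<in> W" "a3 \<in> W" using e by (blast intro: source)+
  consider "i = 0" | "i = m + 2" | "i \<noteq> 0" "i \<noteq> m + 2" by blast
  then show "(?q a1 a2 a3, ?q b1 b2 b3) \<in> ?F'"
  proof cases
    case 1
    then show ?thesis using e(1) by (simp add: sink_padded_chain_def)
  next
    case 2
    then show ?thesis using e(3) by (simp add: sink_padded_chain_def)
  next
    case 3
    have "i - 1 \<le> m" using i 3 by linarith
    then have poly: "polymorphism3 W F (p (i - 1))"
      using chain unfolding hagemann_mitschke_chain_def by blast
    have qa: "?q a1 a2 a3 = p (i - 1) a1 a2 a3" using 3 a by (simp add: sink_padded_chain_inner)
    have "p (i - 1) a1 a2 a3 \<in> W" using poly a unfolding polymorphism3_def by blast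
    then have to_sink: "(?q a1 a2 a3, t) \<in> ?F'" using qa by blast
    show ?thesis
    proof (cases "b1 \<in> W \<and> b2 \<in> W \<and> b3 \<in> W")
      case True
      then have qb: "?q b1 b2 b3 = p (i - 1) b1 b2 b3" using 3 by (simp add: sink_padded_chain_inner)
      have "(p (i - 1) a1 a2 a3, p (i - 1) b1 b2 b3) \<in> F"
        using True by (intro polymorphism3_edge[OF poly] old_edge e) simp_all
      then show ?thesis unfolding qa qb by blast
    next
      case b_out: False
      then have qb: "?q b1 b2 b3 =
          (if i = 1 \<and> b2 = b3 then b1 else if i = m + 1 \<and> b1 = b2 then b3 else t)"
        using 3 by (simp add: sink_padded_chain_outer)
      consider "i = 1" "?q b1 b2 b3 = b1" | "i = m + 1" "?q b1 b2 b3 = b3" | "?q b1 b2 b3 = t"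
        unfolding qb by presburger
      then show ?thesis
      proof cases
        case 1
        then have "?q a1 a2 a3 = a1" using qa chain a unfolding hagemann_mitschke_chain_def by simp
        then show ?thesis using 1 e(1) by simp
      next
        case 2
        then have "?q a1 a2 a3 = a3" using qa chain a unfolding hagemann_mitschke_chain_def by simp
        then show ?thesis using 2 e(3) by simp
      next
        case 3
        then show ?thesis using to_sink by simp
      qed
    qed
  qed
qed

lemma hagemann_mitschke_chain_sink_padded:
  assumes F: "F \<subseteq> W \<times> W" and t: "t \<notin> W" and chain: "hagemann_mitschke_chain W F m p"
  shows "hagemann_mitschke_chain (insert t W) (F \<union> (\<lambda>w. (w, t)) ` W) (m + 2)
           (sink_padded_chain W t m p)" (is "hagemann_mitschke_chain _ _ _ ?q")
proof -
  have first: "?q 0 x y z = x" and last: "?q (m + 2) x y z = z" for x y z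
    by (simp_all add: sink_padded_chain_def)
  have step: "?q i x x y = ?q (Suc i) x y y"
    if i: "i < m + 2" and x: "x \<in> insert t W" and y: "y \<in> insert t W" for i x y
  proof (cases "x \<in> W \<and> y \<in> W")
    case True
    consider "i = 0" | "i = m + 1" | "0 < i" "i \<le> m" using i by linarith
    then show ?thesis
    proof cases
      case 1
      have "p 0 x y y = x" using chain True unfolding hagemann_mitschke_chain_def by auto
      then show ?thesis using 1 True by (simp add: first sink_padded_chain_inner)
    next
      case 2
      have "p m x x y = y" using chain True unfolding hagemann_mitschke_chain_def by auto
      then show ?thesis using 2 True last[of x y y] by (simp add: sink_padded_chain_inner)
    next
      case 3
      then have "p (i - 1) x x y = p i x y y"
        using chain True unfolding hagemann_mitschke_chain_def by (metis Suc_pred' less_eq_Suc_le)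
      then show ?thesis using 3 True by (simp add: sink_padded_chain_inner)
    qed
  next
    case outside: False
    then have "x = y \<Longrightarrow> x = t" using x y by blast
    then show ?thesis
      using i outside last[of x y y] by (cases "i = 0"; cases "i = m + 1")
        (simp_all add: first sink_padded_chain_outer)
  qed
  show ?thesis
    unfolding hagemann_mitschke_chain_def
    using polymorphism3_sink_padded_chain[OF F t chain] first last step by simp
qed

lemma ext_vertices_Suc: "ext_vertices V (Suc n) = insert (Inr (Suc n)) (ext_vertices V n)"
  unfolding ext_vertices_def by (auto simp: atLeastAtMostSuc_conv)

lemma ext_vertices_mono: "j \<le> k \<Longrightarrow> ext_vertices V j \<subseteq> ext_vertices V k"
  unfolding ext_vertices_def by auto

lemma ext_edges_Suc:
  "ext_edges V E (Suc n) = ext_edges V E n \<union> (\<lambda>w. (w, Inr (Suc n))) ` ext_vertices V n"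
  unfolding ext_edges_def ext_vertices_def by (auto simp: le_Suc_eq)

lemma ext_edges_subset: "E \<subseteq> V \<times> V \<Longrightarrow> ext_edges V E n \<subseteq> ext_vertices V n \<times> ext_vertices V n"
  unfolding ext_edges_def ext_vertices_def by auto

lemma Inl_Inl_in_ext_edges: "(x, y) \<in> E \<Longrightarrow> (Inl x, Inl y) \<in> ext_edges V E n"
  unfolding ext_edges_def by blast

lemma to_Inr_in_ext_edges: "y \<in> ext_vertices V k \<Longrightarrow> Suc k \<le> n \<Longrightarrow> (y, Inr (Suc k)) \<in> ext_edges V E n"
  unfolding ext_edges_def ext_vertices_def by auto

lemma ext_edges_into_Inl: "(u, Inl y) \<in> ext_edges V E n \<Longrightarrow> \<exists>x. u = Inl x \<and> (x, y) \<in> E"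
  unfolding ext_edges_def by blast

lemma single_valued_ext_edges_0:
  "single_valued E \<Longrightarrow> single_valued (ext_edges V E 0)"
  "single_valued (E\<inverse>) \<Longrightarrow> single_valued ((ext_edges V E 0)\<inverse>)"
  unfolding ext_edges_def single_valued_def by auto

lemma cong_permutable_ext:
  assumes "E \<subseteq> V \<times> V" and "single_valued E" and "single_valued (E\<inverse>)"
  shows "cong_permutable (ext_vertices V n) (ext_edges V E n) (2 * n + 2)"
proof (induction n)
  case 0
  have "cong_permutable (ext_vertices V 0) (ext_edges V E 0) 2"
    by (intro cong_permutable_2_if_bijective single_valued_ext_edges_0 assms(2,3))
  then show ?case by (simp only: mult_zero_right add.left_neutral)
next
  case (Suc n)
  then obtain p where chain: "hagemann_mitschke_chain (ext_vertices V n) (ext_edges V E n) (2 * n + 2) p"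
    unfolding cong_permutable_iff_chain by blast
  have "Inr (Suc n) \<notin> ext_vertices V n" unfolding ext_vertices_def by auto
  from hagemann_mitschke_chain_sink_padded[OF ext_edges_subset[OF assms(1)] this chain]
  have "cong_permutable (ext_vertices V (Suc n)) (ext_edges V E (Suc n)) (2 * n + 2 + 2)"
    unfolding cong_permutable_iff_chain ext_vertices_Suc ext_edges_Suc by blast
  then show ?case by simp
qed

lemma hagemann_mitschke_chain_ext_fixes_left:
  assumes chain: "hagemann_mitschke_chain (ext_vertices V n) (ext_edges V E n) m p"
    and out: "\<forall>x\<in>V. \<exists>y\<in>V. (x, y) \<in> E" and in_unique: "single_valued (E\<inverse>)"
    and j: "j \<le> n" "j \<le> m"
  shows "\<forall>x\<in>V. \<forall>y\<in>ext_vertices V (n - j). \<forall>z\<in>ext_vertices V (n - j). p j (Inl x) y z = Inl x"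
  using j
proof (induction j)
  case 0
  have "Inl x \<in> ext_vertices V n" if "x \<in> V" for x using that unfolding ext_vertices_def by blast
  then show ?case using chain unfolding hagemann_mitschke_chain_def by simp
next
  case (Suc j)
  define k where "k = n - Suc j"
  have level: "n - j = Suc k" "Suc k \<le> n" using Suc.prems unfolding k_def by auto
  have ext: "ext_vertices V (Suc k) \<subseteq> ext_vertices V n" using level by (simp add: ext_vertices_mono)
  have Inl: "Inl x \<in> ext_vertices V l" if "x \<in> V" for x l using that unfolding ext_vertices_def by blast
  have top: "Inr (Suc k) \<in> ext_vertices V (Suc k)" unfolding ext_vertices_def by auto
  have poly: "polymorphism3 (ext_vertices V n) (ext_edges V E n) (p (Suc j))"
    using chain Suc.prems unfolding hagemann_mitschke_chain_def by simp
  show ?case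
  proof (intro ballI)
    fix x y z assume x: "x \<in> V" and y: "y \<in> ext_vertices V (n - Suc j)"
      and z: "z \<in> ext_vertices V (n - Suc j)"
    obtain x' where x': "x' \<in> V" "(x, x') \<in> E" using out x by blast
    have "p j (Inl x') (Inl x') (Inr (Suc k)) = Inl x'"
      using Suc.IH Suc.prems x' Inl top level by simp
    moreover have "p j (Inl x') (Inl x') (Inr (Suc k)) = p (Suc j) (Inl x') (Inr (Suc k)) (Inr (Suc k))"
      using chain Suc.prems x' Inl top ext unfolding hagemann_mitschke_chain_def by auto
    ultimately have fixed: "p (Suc j) (Inl x') (Inr (Suc k)) (Inr (Suc k)) = Inl x'" by simp
    have "(p (Suc j) (Inl x) y z, p (Suc j) (Inl x') (Inr (Suc k)) (Inr (Suc k))) \<in> ext_edges V E n"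
      using y z level unfolding k_def[symmetric]
      by (intro polymorphism3_edge[OF poly] Inl_Inl_in_ext_edges x' to_Inr_in_ext_edges)
    then obtain a where "p (Suc j) (Inl x) y z = Inl a" "(a, x') \<in> E"
      unfolding fixed by (blast dest: ext_edges_into_Inl)
    with x' in_unique show "p (Suc j) (Inl x) y z = Inl x"
      unfolding single_valued_def by blast
  qed
qed

lemma not_cong_permutable_ext:
  assumes out: "\<forall>x\<in>V. \<exists>y\<in>V. (x, y) \<in> E" and in_unique: "single_valued (E\<inverse>)"
    and vw: "v \<in> V" "w \<in> V" "v \<noteq> w"
  shows "\<not> cong_permutable (ext_vertices V n) (ext_edges V E n) (2 * n + 1)"
proof
  assume "cong_permutable (ext_vertices V n) (ext_edges V E n) (2 * n + 1)"
  then obtain p where chain: "hagemann_mitschke_chain (ext_vertices V n) (ext_edges V E n) (2 * n + 1) p"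
    unfolding cong_permutable_iff_chain by blast
  have base: "Inl v \<in> ext_vertices V 0" "Inl w \<in> ext_vertices V 0"
    using vw unfolding ext_vertices_def by auto
  have "p n (Inl v) (Inl v) (Inl w) = Inl v"
    using hagemann_mitschke_chain_ext_fixes_left[OF chain out in_unique, of n] vw base by simp
  moreover have "p (2 * n + 1 - n) (Inl v) (Inl w) (Inl w) = Inl w"
    using hagemann_mitschke_chain_ext_fixes_left[OF hagemann_mitschke_chain_reverse[OF chain] out in_unique,
        of n] vw base by simp
  moreover have "p n (Inl v) (Inl v) (Inl w) = p (2 * n + 1 - n) (Inl v) (Inl w) (Inl w)"
  proof -
    have "Inl v \<in> ext_vertices V n" "Inl w \<in> ext_vertices V n"
      using base ext_vertices_mono[of 0 n V] by auto
    moreover have "n < 2 * n + 1" "2 * n + 1 - n = Suc n" by auto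
    ultimately show ?thesis using chain unfolding hagemann_mitschke_chain_def by metis
  qed
  ultimately show False using vw by simp
qed

lemma permutational_single_valued:
  assumes "permutational V E"
  shows "single_valued E" and "single_valued (E\<inverse>)"
proof -
  obtain \<sigma> where "\<sigma> permutes V" and E: "E = {(v, \<sigma> v) | v. v \<in> V}"
    using assms unfolding permutational_def by blast
  then have "inj \<sigma>" by (simp add: permutes_inj)
  then show "single_valued E" "single_valued (E\<inverse>)"
    unfolding E single_valued_def by (auto dest: injD)
qed

lemma permutational_out_edge:
  assumes "permutational V E" and "x \<in> V"
  shows "\<exists>y\<in>V. (x, y) \<in> E \<and> y \<noteq> x"
proof -
  obtain \<sigma> where "\<sigma> permutes V" "\<forall>v\<in>V. \<sigma> v \<noteq> v" "E = {(v, \<sigma> v) | v. v \<in> V}"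
    using assms(1) unfolding permutational_def by blast
  then show ?thesis using assms(2) by (auto simp: permutes_in_image)
qed

theorem proposition6p3:
  fixes V :: "'a set" and E :: "('a \<times> 'a) set" and n :: nat
  assumes "permutational V E" and "V \<noteq> {}"
  shows "cong_permutable (ext_vertices V n) (ext_edges V E n) (2 * n + 2) \<and>
         \<not> cong_permutable (ext_vertices V n) (ext_edges V E n) (2 * n + 1)"
proof -
  have sv: "single_valued E" "single_valued (E\<inverse>)"
    using assms(1) by (rule permutational_single_valued)+
  have EV: "E \<subseteq> V \<times> V" using assms(1) unfolding permutational_def digraph_def by blast
  have out: "\<forall>x\<in>V. \<exists>y\<in>V. (x, y) \<in> E" using permutational_out_edge[OF assms(1)] by blast
  obtain v where v: "v \<in> V" using assms(2) by blast
  then obtain w where w: "w \<in> V" "w \<noteq> v" using permutational_out_edge[OF assms(1)] by blast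
  show ?thesis
    using cong_permutable_ext[OF EV sv] not_cong_permutable_ext[OF out sv(2) v w(1)] w(2)
    by metis
qed
end
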